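(* Let the Schreier families be the standard ones described in the context. If $\alpha$ and $\eta$ are countable ordinals with $\ell(\alpha)\le\eta$ and $m\in\mathbb{N}$, then $\mathcal{S}_\alpha[\mathcal{S}_{\omega^\eta\cdot m}]=\mathcal{S}_{\omega^\eta\cdot m+\alpha}$.
   Context: For finite $E,F\subseteq\mathbb{N}$, $E<F$ means $\max E<\min F$. $\mathcal{M}[\mathcal{N}]=\{\bigcup_{i=1}^kF_i:F_i\in\mathcal{N},F_1<\dots<F_k,\{\min F_1,\dots,\min F_k\}\in\mathcal{M}\}$. For a countable ordinal $\eta\ne0$ with Cantor normal form $\omega^{\gamma_1}k_1+\dots+\omega^{\gamma_p}k_p$ ($\gamma_1>\dots>\gamma_p$), $\ell(\eta)=\gamma_1$ (and $\ell(0)=0$). Schreier families: $\mathcal{S}_0=\{\{n\}:n\in\mathbb{N}\}\cup\{\emptyset\}$, $\mathcal{S}_1=\{F\subseteq\mathbb{N}\text{ finite}:|F|\le\min F\}$, $\mathcal{S}_{\beta+1}=\mathcal{S}_1[\mathcal{S}_\beta]$, and for a countable limit ordinal $\beta$ with associated sequence $\hat\beta_n\uparrow\beta$, $\mathcal{S}_\beta=\{F:F\in\mathcal{S}_{\hat\beta_n}\text{ for some }n\le\min F\}$. Standard choice: fix for every countable limit ordinal $\lambda$ a sequence $(\zeta_n)$ strictly increasing to $\lambda$; for a limit ordinal $\beta=\omega^{\beta_1}m_1+\dots+\omega^{\beta_k}m_k$ (Cantor normal form, $\beta_k\ge1$) set $\hat\beta_n=\omega^{\beta_1}m_1+\dots+\omega^{\beta_k}(m_k-1)+\omega^{\beta_k-1}\cdot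 n$ if $\beta_k$ is a successor, and $\hat\beta_n=\omega^{\beta_1}m_1+\dots+\omega^{\beta_k}(m_k-1)+\omega^{\zeta_n}$ if $\beta_k$ is a limit with fixed sequence $(\zeta_n)\uparrow\beta_k$. *)

theory Defs
  imports "HOL-Library.Countable_Set"
begin

text \<open>We work in an arbitrary well-ordered type 'o; the theorem assumes that
every initial segment is countable and the type itself is uncountable, i.e.
'o has order type omega_1, so its elements are exactly the countable ordinals.\<close>

definition ozero :: "'o::wellorder" where
  "ozero = (LEAST x. True)"

definition osucc :: "'o::wellorder \<Rightarrow> 'o" where
  "osucc x = (LEAST y. x < y)"

definition osup :: "'o::wellorder set \<Rightarrow> 'o" where
  "osup A = (LEAST y. \<forall>a\<in>A. a \<le> y)"

definition is_limit :: "'o::wellorder \<Rightarrow> bool" where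
  "is_limit x \<longleftrightarrow> x \<noteq> ozero \<and> (\<forall>y<x. osucc y < x)"

definition is_succ :: "'o::wellorder \<Rightarrow> bool" where
  "is_succ x \<longleftrightarrow> (\<exists>y. x = osucc y)"

definition opred :: "'o::wellorder \<Rightarrow> 'o" where
  "opred x = (THE y. x = osucc y)"

definition oadd :: "'o::wellorder \<Rightarrow> 'o \<Rightarrow> 'o" where
  "oadd a = (THE f. f ozero = a \<and> (\<forall>b. f (osucc b) = osucc (f b))
      \<and> (\<forall>l. is_limit l \<longrightarrow> f l = osup (f ` {b. b < l})))"

definition omul :: "'o::wellorder \<Rightarrow> 'o \<Rightarrow> 'o" where
  "omul a = (THE f. f ozero = ozero \<and> (\<forall>b. f (osucc b) = oadd (f b) a)
      \<and> (\<forall>l. is_limit l \<longrightarrow> f l = osup (f ` {b. b < l})))"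

definition oone :: "'o::wellorder" where
  "oone = osucc ozero"

definition oomega :: "'o::wellorder" where
  "oomega = (LEAST x. is_limit x)"

definition oexp_omega :: "'o::wellorder \<Rightarrow> 'o" where
  "oexp_omega = (THE f. f ozero = oone \<and> (\<forall>b. f (osucc b) = omul (f b) oomega)
      \<and> (\<forall>l. is_limit l \<longrightarrow> f l = osup (f ` {b. b < l})))"

definition onat :: "nat \<Rightarrow> 'o::wellorder" where
  "onat n = (osucc ^^ n) ozero"

text \<open>A Cantor normal form is a list [(g1,k1),...,(gp,kp)] with g1 > ... > gp
and all ki >= 1, denoting omega^g1 * k1 + ... + omega^gp * kp.\<close>

definition cnf_eval :: "('o::wellorder \<times> nat) list \<Rightarrow> 'o" where
  "cnf_eval xs = foldl (\<lambda>acc (g, k). oadd acc (omul (oexp_omega g) (onat k))) ozero xs"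

definition cnf_valid :: "('o::wellorder \<times> nat) list \<Rightarrow> bool" where
  "cnf_valid xs \<longleftrightarrow> sorted_wrt (\<lambda>p q. fst q < fst p) xs \<and> (\<forall>p\<in>set xs. 1 \<le> snd p)"

definition cnf :: "'o::wellorder \<Rightarrow> ('o \<times> nat) list" where
  "cnf b = (THE xs. cnf_valid xs \<and> cnf_eval xs = b)"

definition ell :: "'o::wellorder \<Rightarrow> 'o" where
  "ell e = (if e = ozero then ozero else fst (hd (cnf e)))"

text \<open>The associated sequence hat-beta_n (n >= 1) of a limit ordinal beta, given the
fixed sequences zeta (zeta l is the fixed sequence for the limit ordinal l).\<close>
definition hat :: "('o::wellorder \<Rightarrow> nat \<Rightarrow> 'o) \<Rightarrow> 'o \<Rightarrow> nat \<Rightarrow> 'o" where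
  "hat zeta b n =
     (let xs = cnf b; (bk, mk) = last xs;
          d = cnf_eval (butlast xs @ [(bk, mk - 1)])
      in if is_succ bk then oadd d (omul (oexp_omega (opred bk)) (onat n))
         else oadd d (oexp_omega (zeta bk n)))"

definition fset_less :: "nat set \<Rightarrow> nat set \<Rightarrow> bool" where
  "fset_less E F \<longleftrightarrow> Max E < Min F"

text \<open>M[N]: unions of N-sets F_1 < ... < F_k (nonempty, k >= 0) with {min F_i} in M.\<close>
definition fam_comp :: "nat set set \<Rightarrow> nat set set \<Rightarrow> nat set set" where
  "fam_comp M N = {\<Union>(set Fs) | Fs.
      (\<forall>F\<in>set Fs. F \<in> N \<and> F \<noteq> {} \<and> finite F)
      \<and> sorted_wrt fset_less Fs \<and> set (map Min Fs) \<in> M}"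

text \<open>Ground set: the positive naturals.\<close>
definition schreier0 :: "nat set set" where
  "schreier0 = {{n} | n. 1 \<le> n} \<union> {{}}"

definition schreier1 :: "nat set set" where
  "schreier1 = {F. finite F \<and> 0 \<notin> F \<and> card F \<le> Min F} \<union> {{}}"

definition schreier_rec :: "('o::wellorder \<Rightarrow> nat \<Rightarrow> 'o) \<Rightarrow> ('o \<Rightarrow> nat set set) \<Rightarrow> bool" where
  "schreier_rec zeta S \<longleftrightarrow>
     S ozero = schreier0 \<and>
     (\<forall>b. S (osucc b) = fam_comp schreier1 (S b)) \<and>
     (\<forall>l. is_limit l \<longrightarrow>
        S l = {{}} \<union> {F. F \<noteq> {} \<and> (\<exists>n. 1 \<le> n \<and> n \<le> Min F \<and> F \<in> S (hat zeta l n))})"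

definition schreier :: "('o::wellorder \<Rightarrow> nat \<Rightarrow> 'o) \<Rightarrow> 'o \<Rightarrow> nat set set" where
  "schreier zeta = (THE S. schreier_rec zeta S)"

end

theory Submission
  imports Defs
begin

text \<open>Transfinite induction on \<open>\<alpha>\<close>, with \<open>N = S\<^bsub>\<omega>\<^sup>\<eta>\<cdot>m\<^esub>\<close> fixed. At successors \<open>S\<^bsub>\<beta>+1\<^esub>[N] = S\<^sub>1[S\<^sub>\<beta>[N]]\<close> by associativity of \<open>M[N]\<close>.
  At a limit \<open>\<alpha>\<close>, composition with \<open>N\<close> commutes with the diagonal construction of \<open>S\<^sub>\<alpha>\<close> from the
  \<open>S\<^bsub>\<alpha>\<^sub>n\<^esub>\<close>, because the minimum of \<open>F\<^sub>1 \<union> \<dots> \<union> F\<^sub>k\<close> is the minimum of the \<open>min F\<^sub>i\<close>; and since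
  \<open>\<ell>(\<alpha>) \<le> \<eta>\<close>, the Cantor normal form of \<open>\<omega>\<^sup>\<eta>\<cdot>m + \<alpha>\<close> is that of \<open>\<alpha>\<close> with \<open>\<omega>\<^sup>\<eta>\<cdot>m\<close> put in front
  (merged with the leading term if \<open>\<ell>(\<alpha>) = \<eta>\<close>), so its last term is unchanged and the associated
  sequence of \<open>\<omega>\<^sup>\<eta>\<cdot>m + \<alpha>\<close> is \<open>\<omega>\<^sup>\<eta>\<cdot>m + \<alpha>\<^sub>n\<close>.\<close>

section \<open>Countable ordinals and transfinite recursion\<close>

lemma ozero_le [simp]: "ozero \<le> x"
  unfolding ozero_def by (rule Least_le) simp

lemma le_ozero_iff [simp]: "x \<le> ozero \<longleftrightarrow> x = ozero"
  using ozero_le[of x] by (auto simp del: ozero_le)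

lemma not_less_ozero [simp]: "\<not> x < ozero"
  using ozero_le[of x] by (auto simp del: ozero_le)

lemma osup_least: "(\<And>a. a \<in> A \<Longrightarrow> a \<le> y) \<Longrightarrow> osup A \<le> y"
  unfolding osup_def by (rule Least_le) auto

lemma osucc_le: "x < y \<Longrightarrow> osucc x \<le> y"
  unfolding osucc_def by (rule Least_le)

lemma not_limit_ozero [simp]: "\<not> is_limit ozero"
  unfolding is_limit_def by auto

lemma limit_osucc_less: "is_limit l \<Longrightarrow> y < l \<Longrightarrow> osucc y < l"
  unfolding is_limit_def by auto

lemma limit_pos: "is_limit l \<Longrightarrow> ozero < l"
  unfolding is_limit_def using ozero_le by (auto simp: le_less)

definition ord_rec :: "'b \<Rightarrow> ('b \<Rightarrow> 'b) \<Rightarrow> (('o::wellorder \<Rightarrow> 'b) \<Rightarrow> 'o \<Rightarrow> 'b) \<Rightarrow> 'o \<Rightarrow> 'b" where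
  "ord_rec z s L = wfrec {(x, y). x < y}
     (\<lambda>f x. if x = ozero then z else if is_succ x then s (f (opred x)) else L f x)"

definition limit_local :: "(('o::wellorder \<Rightarrow> 'b) \<Rightarrow> 'o \<Rightarrow> 'b) \<Rightarrow> bool" where
  "limit_local L \<longleftrightarrow> (\<forall>l f g. is_limit l \<longrightarrow> (\<forall>y<l. f y = g y) \<longrightarrow> L f l = L g l)"

lemma limit_local_osup: "limit_local (\<lambda>f l. osup (f ` {b. b < l}))"
  unfolding limit_local_def by (auto intro!: arg_cong[where f = osup])

definition normal :: "('o::wellorder \<Rightarrow> 'o) \<Rightarrow> bool" where
  "normal f \<longleftrightarrow> (\<forall>b. f b < f (osucc b)) \<and> (\<forall>l. is_limit l \<longrightarrow> f l = osup (f ` {b. b < l}))"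

text \<open>Fixing the fundamental sequences \<open>zeta\<close> here also fixes the type \<open>'o\<close>; the ordinal
  arithmetic uses only the first two assumptions.\<close>
locale countable_ordinals =
  fixes zeta :: "'o::wellorder \<Rightarrow> nat \<Rightarrow> 'o"
  assumes countable_below: "\<forall>x::'o. countable {y. y < x}"
    and uncountable_ordinals: "\<not> countable (UNIV :: 'o set)"
    and fundamental_seq: "\<forall>l. is_limit l \<longrightarrow> strict_mono (zeta l) \<and> osup (range (zeta l)) = l"
begin

lemma countable_bounded: "countable (A::'o set) \<Longrightarrow> \<exists>y. \<forall>a\<in>A. a < y"
proof -
  assume A: "countable A"
  have "countable (\<Union>a\<in>A. insert a {y. y < a})"
    using A countable_below by (intro countable_UN) auto
  then have "(\<Union>a\<in>A. insert a {y. y < a}) \<noteq> UNIV" using uncountable_ordinals by metis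
  then obtain y where "y \<notin> (\<Union>a\<in>A. insert a {y. y < a})" by blast
  then show ?thesis by (auto intro!: exI[of _ y] simp: not_less)
qed

lemma less_osucc: "(x::'o) < osucc x"
proof -
  obtain y where "x < y" using countable_bounded[of "{x}"] by auto
  then show ?thesis unfolding osucc_def by (rule LeastI)
qed

lemma less_osucc_iff: "(y::'o) < osucc x \<longleftrightarrow> y \<le> x"
  using less_osucc[of x] osucc_le[of x y] by (metis leD leI order.strict_trans2)

lemma osucc_le_iff: "osucc (x::'o) \<le> y \<longleftrightarrow> x < y"
  using less_osucc_iff by (metis not_le)

lemma osucc_less_osucc_iff [simp]: "osucc (x::'o) < osucc y \<longleftrightarrow> x < y"
  by (metis less_osucc_iff osucc_le_iff not_le)

lemma osucc_le_osucc_iff [simp]: "osucc (x::'o) \<le> osucc y \<longleftrightarrow> x \<le> y"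
  by (metis osucc_less_osucc_iff not_le)

lemma osucc_inject [simp]: "osucc (x::'o) = osucc y \<longleftrightarrow> x = y"
  by (metis order.antisym osucc_le_osucc_iff order_refl)

lemma osucc_ne_ozero [simp]: "osucc (x::'o) \<noteq> ozero"
  using less_osucc[of x] by (metis not_less_ozero)

lemma opred_osucc [simp]: "opred (osucc (x::'o)) = x"
  unfolding opred_def by auto

lemma is_succ_osucc [simp]: "is_succ (osucc x)"
  unfolding is_succ_def by auto

lemma opred_less: "is_succ x \<Longrightarrow> opred x < (x::'o)"
  unfolding is_succ_def using less_osucc by auto

lemma not_limit_osucc [simp]: "\<not> is_limit (osucc (x::'o))"
  unfolding is_limit_def using less_osucc[of x] by auto

lemma limit_not_succ: "is_limit (x::'o) \<Longrightarrow> \<not> is_succ x"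
  unfolding is_succ_def by auto

lemma ord_cases [case_names zero succ limit]:
  obtains "(x::'o) = ozero" | y where "x = osucc y" | "is_limit x"
proof -
  consider "x = ozero" | "is_limit x" | "x \<noteq> ozero" "\<not> is_limit x" by blast
  then show ?thesis
  proof cases
    case 3
    then obtain y where "y < x" "\<not> osucc y < x" unfolding is_limit_def by auto
    then have "x = osucc y" using osucc_le[of y x] by auto
    then show ?thesis using that by blast
  qed (use that in auto)
qed

lemma ord_induct [case_names zero succ limit]:
  assumes "P ozero" "\<And>y. P y \<Longrightarrow> P (osucc y)"
    "\<And>x. is_limit x \<Longrightarrow> (\<And>y. y < x \<Longrightarrow> P y) \<Longrightarrow> P x"
  shows "P (x::'o)"
proof (induction x rule: less_induct)
  case (less x)
  show ?case
    by (cases x rule: ord_cases) (use assms less less_osucc in auto)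
qed

lemma osup_upper: "countable (A::'o set) \<Longrightarrow> a \<in> A \<Longrightarrow> a \<le> osup A"
proof -
  assume "countable A" "a \<in> A"
  obtain y where y: "\<forall>a\<in>A. a < y" using countable_bounded[OF \<open>countable A\<close>] by auto
  have "\<forall>a\<in>A. a \<le> osup A" unfolding osup_def
    by (rule LeastI[of _ y]) (use y in auto)
  then show ?thesis using \<open>a \<in> A\<close> by auto
qed

lemma less_osup_iff: "countable (A::'o set) \<Longrightarrow> y < osup A \<longleftrightarrow> (\<exists>a\<in>A. y < a)"
  using osup_upper osup_least by (metis dual_order.strict_trans1 leI order.strict_iff_not)

lemma countable_image_below [simp]: "countable (f ` {b. b < (x::'o)})"
  using countable_below by auto

lemma limit_osup_below: "is_limit (l::'o) \<Longrightarrow> osup {b. b < l} = l"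
proof -
  assume l: "is_limit l"
  have "osup {b. b < l} \<le> l" by (rule osup_least) auto
  moreover have "\<not> osup {b. b < l} < l"
  proof
    assume "osup {b. b < l} < l"
    then have "osucc (osup {b. b < l}) \<le> osup {b. b < l}"
      using l limit_osucc_less osup_upper countable_below by blast
    then show False using less_osucc by (metis not_le)
  qed
  ultimately show ?thesis by auto
qed

lemma ord_rec_unfold:
  assumes "limit_local L"
  shows "ord_rec z s L x = (if x = ozero then z else if is_succ x then s (ord_rec z s L (opred x))
      else L (ord_rec z s L) (x::'o))"
proof -
  let ?R = "{(x, y). x < (y::'o)}"
  have "ord_rec z s L x = (if x = ozero then z else if is_succ x then s (cut (ord_rec z s L) ?R x (opred x))
      else L (cut (ord_rec z s L) ?R x) x)"
    unfolding ord_rec_def by (subst wfrec) (auto intro: wf)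
  moreover have "is_limit x" if "x \<noteq> ozero" "\<not> is_succ x"
    using that by (cases x rule: ord_cases) auto
  ultimately show ?thesis
    using assms opred_less unfolding limit_local_def by (auto simp: cut_apply)
qed

lemma ord_rec_zero [simp]: "limit_local L \<Longrightarrow> ord_rec z s L (ozero::'o) = z"
  by (subst ord_rec_unfold) simp_all

lemma ord_rec_succ [simp]: "limit_local L \<Longrightarrow> ord_rec z s L (osucc (b::'o)) = s (ord_rec z s L b)"
  by (subst ord_rec_unfold) simp_all

lemma ord_rec_limit: "limit_local L \<Longrightarrow> is_limit (l::'o) \<Longrightarrow> ord_rec z s L l = L (ord_rec z s L) l"
  by (subst ord_rec_unfold) (auto simp: limit_not_succ)

lemma ord_rec_unique:
  assumes L: "limit_local L" and f: "f ozero = z" "\<And>b. f (osucc b) = s (f b)"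
    "\<And>l. is_limit l \<Longrightarrow> f l = L f (l::'o)"
  shows "f = ord_rec z s L"
proof
  fix x show "f x = ord_rec z s L x"
  proof (induction x rule: less_induct)
    case (less x)
    show ?case
    proof (cases x rule: ord_cases)
      case limit
      then have "L f x = L (ord_rec z s L) x" using L less unfolding limit_local_def by blast
      then show ?thesis using limit f ord_rec_limit[OF L] by auto
    qed (use f L less less_osucc in auto)
  qed
qed

lemma The_ord_rec:
  assumes "limit_local L"
  shows "(THE f. f ozero = z \<and> (\<forall>b. f (osucc b) = s (f b)) \<and> (\<forall>l. is_limit l \<longrightarrow> f l = L f (l::'o)))
    = ord_rec z s L"
proof (rule the_equality)
  fix f assume "f ozero = z \<and> (\<forall>b. f (osucc b) = s (f b)) \<and> (\<forall>l. is_limit l \<longrightarrow> f l = L f l)"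
  then show "f = ord_rec z s L" by (intro ord_rec_unique[OF assms]) auto
qed (use assms ord_rec_limit in auto)

lemma normal_strict:
  assumes "normal (f :: 'o \<Rightarrow> 'o)" shows "b < c \<Longrightarrow> f b < f c"
proof (induction c arbitrary: b rule: ord_induct)
  case (succ y)
  then have "b \<le> y" by (simp add: less_osucc_iff)
  then show ?case using succ assms unfolding normal_def
    by (metis order_le_less order.strict_trans)
next
  case (limit x)
  then have "f (osucc b) \<le> osup (f ` {b. b < x})"
    by (intro osup_upper) (auto simp: limit_osucc_less)
  then have "f (osucc b) \<le> f x" using assms limit(1) unfolding normal_def by simp
  then show ?case using assms unfolding normal_def by (metis order.strict_trans2)
qed simp

lemma normal_less_iff: "normal (f :: 'o \<Rightarrow> 'o) \<Longrightarrow> f b < f c \<longleftrightarrow> b < c"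
  by (metis normal_strict not_less_iff_gr_or_eq order.asym)

lemma normal_le_iff: "normal (f :: 'o \<Rightarrow> 'o) \<Longrightarrow> f b \<le> f c \<longleftrightarrow> b \<le> c"
  by (metis normal_less_iff not_le)

lemma normal_inject: "normal (f :: 'o \<Rightarrow> 'o) \<Longrightarrow> f b = f c \<longleftrightarrow> b = c"
  by (metis normal_le_iff order.antisym order_refl)

lemma normal_ge: assumes "normal (f :: 'o \<Rightarrow> 'o)" shows "b \<le> f b"
proof (induction b rule: less_induct)
  case (less x)
  show ?case
  proof (rule ccontr)
    assume "\<not> x \<le> f x"
    then have "f (f x) < f x" using assms normal_strict by auto
    moreover have "f x \<le> f (f x)" using less \<open>\<not> x \<le> f x\<close> by auto
    ultimately show False by auto
  qed
qed

lemma normal_limit: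
  assumes "normal (f :: 'o \<Rightarrow> 'o)" "is_limit l" shows "is_limit (f l)"
  unfolding is_limit_def
proof (intro conjI allI impI)
  show "f l \<noteq> ozero" using normal_strict[OF assms(1) limit_pos[OF assms(2)]] by auto
next
  fix y assume "y < f l"
  then obtain b where b: "b < l" "y < f b"
    using assms unfolding normal_def by (auto simp: less_osup_iff)
  then have "osucc y \<le> f b" by (simp add: osucc_le_iff)
  also have "f b < f l" using b assms normal_strict by auto
  finally show "osucc y < f l" .
qed

lemma limit_osup:
  fixes A :: "'o set"
  assumes "countable A" "osup A \<notin> A" "A \<noteq> {}"
  shows "is_limit (osup A)"
  unfolding is_limit_def
proof (intro conjI allI impI)
  obtain a where a: "a \<in> A" using assms(3) by blast
  then have "a \<le> osup A" by (rule osup_upper[OF assms(1)])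
  then show "osup A \<noteq> ozero" using a assms(2) by auto
  fix y assume "y < osup A"
  then obtain a where "a \<in> A" "y < a" using assms by (auto simp: less_osup_iff)
  then have "osucc y \<le> a" by (simp add: osucc_le_iff)
  moreover have "a < osup A" using \<open>a \<in> A\<close> assms osup_upper by (metis order_le_less)
  ultimately show "osucc y < osup A" by auto
qed

lemma normal_osup:
  assumes "normal (f :: 'o \<Rightarrow> 'o)" "countable A" "A \<noteq> {}"
  shows "f (osup A) = osup (f ` A)"
proof (rule order.antisym)
  show "osup (f ` A) \<le> f (osup A)"
    by (rule osup_least) (use assms osup_upper normal_le_iff in blast)
next
  show "f (osup A) \<le> osup (f ` A)"
  proof (cases "osup A \<in> A")
    case True then show ?thesis using assms by (simp add: osup_upper)
  next
    case False
    then have "f (osup A) = osup (f ` {b. b < osup A})"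
      using assms limit_osup unfolding normal_def by blast
    also have "\<dots> \<le> osup (f ` A)"
    proof (rule osup_least)
      fix z assume "z \<in> f ` {b. b < osup A}"
      then obtain b where "b < osup A" "z = f b" by auto
      then obtain a where "a \<in> A" "b < a" using assms by (auto simp: less_osup_iff)
      then have "z \<le> f a" using \<open>z = f b\<close> assms normal_le_iff by auto
      also have "f a \<le> osup (f ` A)" using \<open>a \<in> A\<close> assms by (auto intro: osup_upper)
      finally show "z \<le> osup (f ` A)" .
    qed
    finally show ?thesis .
  qed
qed

lemma normal_bracket:
  assumes f: "normal (f :: 'o \<Rightarrow> 'o)" and "f ozero \<le> a"
  obtains g where "f g \<le> a" "a < f (osucc (g::'o))"
proof -
  have "a < f (osucc a)" using normal_ge[OF f, of "osucc a"] less_osucc by (metis order.strict_trans2)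
  then have ex: "\<exists>g. a < f g" ..
  define g0 where "g0 = (LEAST g. a < f g)"
  have g0: "a < f g0" unfolding g0_def using ex by (rule LeastI_ex)
  have below_g0: "f g \<le> a" if "g < g0" for g
    using that unfolding g0_def using not_less_Least not_less by metis
  show ?thesis
  proof (cases g0 rule: ord_cases)
    case zero
    then show ?thesis using g0 assms(2) by simp
  next
    case (succ g)
    then show ?thesis using that g0 below_g0 less_osucc by blast
  next
    case limit
    then obtain b where "b < g0" "a < f b"
      using g0 f unfolding normal_def by (auto simp: less_osup_iff)
    then show ?thesis using below_g0 by (metis leD)
  qed
qed

lemma normal_bracket_unique:
  assumes f: "normal (f :: 'o \<Rightarrow> 'o)" and "f g \<le> a" "a < f (osucc g)" "f g' \<le> a" "a < f (osucc (g'::'o))"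
  shows "g = g'"
proof -
  have "\<not> osucc g \<le> g'" "\<not> osucc g' \<le> g"
    using assms normal_le_iff[OF f] by (meson leD order.trans)+
  then show ?thesis by (simp add: osucc_le_iff)
qed

end

section \<open>Ordinal arithmetic\<close>

lemma onat_0 [simp]: "onat 0 = ozero"
  by (simp add: onat_def)

lemma onat_Suc [simp]: "onat (Suc n) = osucc (onat n)"
  by (simp add: onat_def)

abbreviation oterm :: "'o::wellorder \<Rightarrow> nat \<Rightarrow> 'o" where
  "oterm g k \<equiv> omul (oexp_omega g) (onat k)"

context countable_ordinals
begin

lemma oadd_eq_ord_rec: "oadd (a::'o) = ord_rec a osucc (\<lambda>f l. osup (f ` {b. b < l}))"
  unfolding oadd_def by (rule The_ord_rec[OF limit_local_osup])

lemma omul_eq_ord_rec: "omul (a::'o) = ord_rec ozero (\<lambda>x. oadd x a) (\<lambda>f l. osup (f ` {b. b < l}))"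
  unfolding omul_def by (rule The_ord_rec[OF limit_local_osup])

lemma oexp_omega_eq_ord_rec:
  "(oexp_omega :: 'o \<Rightarrow> 'o) = ord_rec oone (\<lambda>x. omul x oomega) (\<lambda>f l. osup (f ` {b. b < l}))"
  unfolding oexp_omega_def by (rule The_ord_rec[OF limit_local_osup])

lemma oadd_ozero [simp]: "oadd a ozero = (a::'o)"
  and oadd_osucc [simp]: "oadd a (osucc b) = osucc (oadd a (b::'o))"
  and oadd_limit: "is_limit (l::'o) \<Longrightarrow> oadd a l = osup (oadd a ` {b. b < l})"
  by (simp_all add: oadd_eq_ord_rec ord_rec_limit limit_local_osup)

lemma omul_ozero [simp]: "omul a ozero = (ozero::'o)"
  and omul_osucc [simp]: "omul a (osucc b) = oadd (omul a b) (a::'o)"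
  and omul_limit: "is_limit (l::'o) \<Longrightarrow> omul a l = osup (omul a ` {b. b < l})"
  by (simp_all add: omul_eq_ord_rec ord_rec_limit limit_local_osup)

lemma oexp_omega_ozero [simp]: "oexp_omega (ozero::'o) = oone"
  and oexp_omega_osucc: "oexp_omega (osucc b) = omul (oexp_omega b) (oomega::'o)"
  and oexp_omega_limit: "is_limit (l::'o) \<Longrightarrow> oexp_omega l = osup (oexp_omega ` {b. b < l})"
  by (simp_all add: oexp_omega_eq_ord_rec ord_rec_limit limit_local_osup)

lemma normal_oadd: "normal (oadd (a::'o))"
  unfolding normal_def by (auto simp: less_osucc oadd_limit)

lemma oadd_less_iff [simp]: "oadd (a::'o) b < oadd a c \<longleftrightarrow> b < c"
  by (rule normal_less_iff[OF normal_oadd])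

lemma oadd_le_iff [simp]: "oadd (a::'o) b \<le> oadd a c \<longleftrightarrow> b \<le> c"
  by (rule normal_le_iff[OF normal_oadd])

lemma oadd_left_cancel [simp]: "oadd (a::'o) b = oadd a c \<longleftrightarrow> b = c"
  by (rule normal_inject[OF normal_oadd])

lemma le_oadd_left: "(a::'o) \<le> oadd a b"
  using oadd_le_iff[of a ozero b] by simp

lemma ozero_oadd [simp]: "oadd ozero (a::'o) = a"
proof (induction a rule: ord_induct)
  case (limit x)
  then have "oadd ozero ` {b. b < x} = {b. b < x}" by (auto simp: image_def)
  then show ?case using limit by (simp add: oadd_limit limit_osup_below)
qed auto

lemma oadd_assoc: "oadd (oadd a b) c = oadd a (oadd b (c::'o))"
proof (induction c rule: ord_induct)
  case (limit l)
  have "oadd (oadd a b) l = osup (oadd a ` oadd b ` {c. c < l})"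
    using limit by (simp add: oadd_limit image_image)
  also have "\<dots> = oadd a (osup (oadd b ` {c. c < l}))"
    using limit_pos[OF limit(1)] by (intro normal_osup[symmetric] normal_oadd) auto
  also have "\<dots> = oadd a (oadd b l)" using limit by (simp add: oadd_limit)
  finally show ?case .
qed auto

lemma oadd_is_limit: "is_limit l \<Longrightarrow> is_limit (oadd (a::'o) l)"
  by (rule normal_limit[OF normal_oadd])

lemma oadd_diff: assumes "(a::'o) \<le> c" obtains b where "c = oadd a b"
proof -
  define b where "b = (LEAST b. c \<le> oadd a b)"
  have "c \<le> oadd a c" by (rule normal_ge[OF normal_oadd])
  then have b_ge: "c \<le> oadd a b" unfolding b_def by (rule LeastI)
  have below_b: "oadd a b' < c" if "b' < b" for b'
    using that unfolding b_def using not_less_Least by (metis not_le)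
  have "oadd a b \<le> c"
  proof (cases b rule: ord_cases)
    case (succ y)
    then show ?thesis using below_b less_osucc by (simp add: osucc_le_iff)
  next
    case limit
    show ?thesis unfolding oadd_limit[OF limit]
      by (rule osup_least) (use below_b in \<open>auto intro: less_imp_le\<close>)
  qed (use assms in simp)
  then show ?thesis using b_ge that by (metis order.antisym)
qed

lemma normal_omul: "ozero < (a::'o) \<Longrightarrow> normal (omul a)"
  unfolding normal_def using oadd_less_iff[of _ ozero a] by (auto simp: omul_limit)

lemma omul_less_iff: "ozero < (a::'o) \<Longrightarrow> omul a b < omul a c \<longleftrightarrow> b < c"
  by (rule normal_less_iff[OF normal_omul])

lemma omul_le_iff: "ozero < (a::'o) \<Longrightarrow> omul a b \<le> omul a c \<longleftrightarrow> b \<le> c"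
  by (rule normal_le_iff[OF normal_omul])

lemma omul_oone [simp]: "omul (a::'o) oone = a"
  by (simp add: oone_def)

lemma omul_onat_add: "omul (a::'o) (onat (k + j)) = oadd (omul a (onat k)) (omul a (onat j))"
  by (induction j) (auto simp: oadd_assoc)

lemma onat_le_iff [simp]: "(onat n :: 'o) \<le> onat k \<longleftrightarrow> n \<le> k"
proof -
  have "strict_mono (onat :: nat \<Rightarrow> 'o)"
    by (rule strict_mono_Suc_iff[THEN iffD2]) (simp add: less_osucc)
  then show ?thesis by (simp add: strict_mono_less_eq)
qed

lemma ex_limit: "\<exists>x::'o. is_limit x"
proof -
  have "\<exists>y::'o. \<forall>n. onat n < y" using countable_bounded[of "range onat"] by auto
  define w where "w = (LEAST y::'o. \<forall>n. onat n < y)"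
  have above: "\<forall>n. onat n < w" unfolding w_def using \<open>\<exists>y. _\<close> by (rule LeastI_ex)
  have below: "\<exists>n. z \<le> onat n" if "z < w" for z
    using not_less_Least[of z "\<lambda>y. \<forall>n. onat n < y"] that unfolding w_def by (auto simp: not_less)
  have "is_limit w" unfolding is_limit_def
  proof (intro conjI allI impI)
    show "w \<noteq> ozero" using above[rule_format, of 0] by auto
    fix z assume "z < w"
    then obtain n where "osucc z \<le> onat (Suc n)" using below by auto
    then show "osucc z < w" using above by (metis order.strict_trans1)
  qed
  then show ?thesis ..
qed

lemma oomega_is_limit: "is_limit (oomega::'o)"
  unfolding oomega_def using ex_limit by (rule LeastI_ex)

lemma onat_less_oomega [simp]: "(onat n :: 'o) < oomega"
  by (induction n) (auto simp: limit_pos oomega_is_limit limit_osucc_less)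

lemma less_oomega_iff: "(b::'o) < oomega \<longleftrightarrow> (\<exists>n. b = onat n)"
proof
  show "b < oomega \<Longrightarrow> \<exists>n. b = onat n"
  proof (induction b rule: ord_induct)
    case zero then show ?case by (metis onat_0)
  next
    case (succ y)
    then show ?case using less_osucc by (metis order.strict_trans onat_Suc)
  next
    case (limit x)
    then show ?case unfolding oomega_def by (metis Least_le not_le)
  qed
qed auto

lemma oexp_omega_pos: "ozero < oexp_omega (b::'o)"
proof (induction b rule: ord_induct)
  case (succ y)
  then show ?case
    using normal_strict[OF normal_omul[OF succ] limit_pos[OF oomega_is_limit]]
    by (simp add: oexp_omega_osucc)
next
  case (limit x)
  have "oexp_omega ozero \<le> oexp_omega x" unfolding oexp_omega_limit[OF limit(1)]
    using limit_pos[OF limit(1)] by (intro osup_upper) (auto intro!: image_eqI[of _ _ ozero])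
  then show ?case using less_osucc[of ozero] by (simp add: oone_def)
qed (simp add: oone_def less_osucc)

lemma normal_oexp_omega: "normal (oexp_omega :: 'o \<Rightarrow> 'o)"
  unfolding normal_def
proof (intro conjI allI impI)
  fix b :: 'o
  have "oone < (oomega::'o)"
    using onat_less_oomega[of 1] by (simp add: oone_def)
  then have "omul (oexp_omega b) oone < omul (oexp_omega b) oomega"
    by (simp only: omul_less_iff[OF oexp_omega_pos])
  then show "oexp_omega b < oexp_omega (osucc b)" by (simp add: oexp_omega_osucc)
qed (simp add: oexp_omega_limit)

lemma oexp_omega_less_iff [simp]: "oexp_omega (a::'o) < oexp_omega b \<longleftrightarrow> a < b"
  by (rule normal_less_iff[OF normal_oexp_omega])

lemma oexp_omega_le_iff [simp]: "oexp_omega (a::'o) \<le> oexp_omega b \<longleftrightarrow> a \<le> b"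
  by (rule normal_le_iff[OF normal_oexp_omega])

lemma oterm_le_iff: "oterm (g::'o) k \<le> oterm g j \<longleftrightarrow> k \<le> j"
  by (simp add: omul_le_iff oexp_omega_pos)

lemma oterm_Suc: "oterm g (Suc k) = oadd (oterm g k) (oexp_omega (g::'o))"
  using omul_onat_add[of "oexp_omega g" k 1] by (simp add: oone_def)

lemma oterm_less_oexp_omega_osucc: "oterm g k < oexp_omega (osucc (g::'o))"
  by (simp add: oexp_omega_osucc omul_less_iff oexp_omega_pos)

lemma oexp_omega_le_oterm: "1 \<le> k \<Longrightarrow> oexp_omega g \<le> oterm (g::'o) k"
  using oterm_le_iff[of g 1 k] by (simp add: oone_def[symmetric])

end

section \<open>Cantor normal form\<close>

lemma cnf_eval_Nil [simp]: "cnf_eval [] = ozero"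
  by (simp add: cnf_eval_def)

lemma cnf_eval_snoc: "cnf_eval (xs @ [(g, k)]) = oadd (cnf_eval xs) (oterm g k)"
  by (simp add: cnf_eval_def)

lemma cnf_valid_Nil [simp]: "cnf_valid []"
  by (simp add: cnf_valid_def)

lemma cnf_valid_Cons: "cnf_valid ((g, k) # xs) \<longleftrightarrow> 1 \<le> k \<and> (\<forall>q\<in>set xs. fst q < g) \<and> cnf_valid xs"
  by (auto simp: cnf_valid_def)

context countable_ordinals
begin

lemma oterm_bracket:
  assumes "oexp_omega g \<le> a" "a < oexp_omega (osucc (g::'o))"
  obtains k where "1 \<le> k" "oterm g k \<le> a" "a < oterm g (Suc k)"
proof -
  have "a < osup (omul (oexp_omega g) ` {b. b < oomega})"
    using assms(2) by (simp add: oexp_omega_osucc omul_limit oomega_is_limit)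
  then obtain b where "b < oomega" "a < omul (oexp_omega g) b" by (auto simp: less_osup_iff)
  then have ex: "\<exists>n. a < oterm g n" by (auto simp: less_oomega_iff)
  define n0 where "n0 = (LEAST n. a < oterm g n)"
  have n0: "a < oterm g n0" unfolding n0_def using ex by (rule LeastI_ex)
  have below_n0: "oterm g n \<le> a" if "n < n0" for n
    using that unfolding n0_def using not_less_Least not_less by metis
  obtain k where k: "n0 = Suc k" using n0 by (cases n0) auto
  have "1 \<le> k" using n0 assms(1) k by (cases k) (auto simp: oone_def)
  then show ?thesis using that n0 below_n0 k by simp
qed

lemma oterm_bracket_unique:
  assumes "oterm g k \<le> a" "a < oterm g (Suc k)" "oterm g j \<le> a" "a < oterm (g::'o) (Suc j)"
  shows "k = j"
proof -
  have "\<not> Suc k \<le> j" "\<not> Suc j \<le> k"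
    using assms oterm_le_iff[of g] by (meson leD order.trans)+
  then show ?thesis by simp
qed

lemma cnf_eval_Cons: "cnf_eval ((g, k) # xs) = oadd (oterm g k) (cnf_eval xs :: 'o)"
proof (induction xs rule: rev_induct)
  case (snoc p xs)
  obtain g' k' where "p = (g', k')" by fastforce
  then show ?case
    using snoc cnf_eval_snoc[of "(g, k) # xs" g' k'] cnf_eval_snoc[of xs g' k'] by (simp add: oadd_assoc)
qed (simp add: cnf_eval_def)

lemma cnf_eval_less_oexp_omega:
  "cnf_valid xs \<Longrightarrow> (\<forall>p\<in>set xs. fst p < g) \<Longrightarrow> cnf_eval xs < oexp_omega (g::'o)"
proof (induction xs arbitrary: g)
  case Nil then show ?case by (simp add: oexp_omega_pos)
next
  case (Cons p ys)
  obtain g' k' where p: "p = (g', k')" by fastforce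
  have "cnf_eval (p # ys) < oadd (oterm g' k') (oexp_omega g')"
    using Cons by (simp add: p cnf_eval_Cons cnf_valid_Cons)
  also have "\<dots> < oexp_omega (osucc g')"
    using oterm_less_oexp_omega_osucc[of g' "Suc k'"] by (simp only: oterm_Suc)
  also have "\<dots> \<le> oexp_omega g" using Cons by (simp add: p osucc_le_iff)
  finally show ?case .
qed

lemma cnf_head_bounds:
  assumes "cnf_valid ((g, k) # ys)"
  shows "oterm g k \<le> cnf_eval ((g, k) # ys)" "cnf_eval ((g, k) # ys) < oterm g (Suc k)"
    "oexp_omega g \<le> cnf_eval ((g, k) # ys)" "cnf_eval ((g, k) # ys) < oexp_omega (osucc (g::'o))"
proof -
  show lower: "oterm g k \<le> cnf_eval ((g, k) # ys)" by (simp add: cnf_eval_Cons le_oadd_left)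
  have "cnf_eval ys < oexp_omega g"
    using assms by (intro cnf_eval_less_oexp_omega) (auto simp: cnf_valid_Cons)
  then show upper: "cnf_eval ((g, k) # ys) < oterm g (Suc k)" by (simp add: cnf_eval_Cons oterm_Suc)
  show "oexp_omega g \<le> cnf_eval ((g, k) # ys)"
    using lower oexp_omega_le_oterm[of k g] assms by (auto simp: cnf_valid_Cons)
  show "cnf_eval ((g, k) # ys) < oexp_omega (osucc (g::'o))"
    using upper oterm_less_oexp_omega_osucc by (metis order.strict_trans)
qed

lemma cnf_eval_eq_ozero_iff:
  assumes "cnf_valid xs" shows "cnf_eval xs = (ozero::'o) \<longleftrightarrow> xs = []"
proof (cases xs)
  case (Cons p ys)
  obtain g k where "p = (g, k)" by fastforce
  then have "oexp_omega g \<le> cnf_eval xs" using cnf_head_bounds(3) assms Cons by simp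
  then show ?thesis using oexp_omega_pos[of g] Cons by auto
qed simp

lemma cnf_unique:
  "cnf_valid xs \<Longrightarrow> cnf_valid ys \<Longrightarrow> cnf_eval xs = (cnf_eval ys :: 'o) \<Longrightarrow> xs = ys"
proof (induction xs arbitrary: ys)
  case Nil then show ?case using cnf_eval_eq_ozero_iff[of ys] by simp
next
  case (Cons p xs)
  obtain g k where p: "p = (g, k)" by fastforce
  have "ys \<noteq> []" using Cons.prems cnf_eval_eq_ozero_iff[of "p # xs"] by auto
  then obtain g' k' ys' where ys: "ys = (g', k') # ys'" by (metis list.exhaust prod.exhaust)
  have vx: "cnf_valid ((g, k) # xs)" and vy: "cnf_valid ((g', k') # ys')"
    and eq: "cnf_eval ((g, k) # xs) = cnf_eval ((g', k') # ys')" using Cons.prems p ys by simp_all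
  have g: "g = g'"
    using normal_bracket_unique[OF normal_oexp_omega cnf_head_bounds(3,4)[OF vx]
      cnf_head_bounds(3,4)[OF vy, folded eq]] .
  have k: "k = k'"
    using oterm_bracket_unique[OF cnf_head_bounds(1,2)[OF vx] cnf_head_bounds(1,2)[OF vy, folded eq g]] .
  have "cnf_eval xs = cnf_eval ys'" using eq by (simp add: g k cnf_eval_Cons)
  moreover have "cnf_valid xs" "cnf_valid ys'" using vx vy by (simp_all add: cnf_valid_Cons)
  ultimately have "xs = ys'" using Cons.IH by blast
  then show ?case by (simp add: p ys g k)
qed

lemma cnf_exists: "\<exists>xs. cnf_valid xs \<and> cnf_eval xs = (a::'o)"
proof (induction a rule: less_induct)
  case (less a)
  show ?case
  proof (cases "a = ozero")
    case True then show ?thesis by (intro exI[of _ "[]"]) simp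
  next
    case False
    then have "ozero < a" by (metis ozero_le order.not_eq_order_implies_strict)
    then have "oexp_omega ozero \<le> a" by (simp add: oone_def osucc_le_iff)
    then obtain g where g: "oexp_omega g \<le> a" "a < oexp_omega (osucc g)"
      using normal_bracket[OF normal_oexp_omega] by blast
    then obtain k where k: "1 \<le> k" "oterm g k \<le> a" "a < oterm g (Suc k)" by (rule oterm_bracket)
    obtain r where r: "a = oadd (oterm g k) r" using oadd_diff[OF k(2)] .
    have "r < oexp_omega g" using k(3) by (simp add: r oterm_Suc)
    then have "r < a" using g(1) by simp
    then obtain ys where ys: "cnf_valid ys" "cnf_eval ys = r" using less by blast
    have "fst q < g" if "q \<in> set ys" for q
    proof -
      obtain g' k' ys' where "ys = (g', k') # ys'" using \<open>q \<in> set ys\<close> by (metis list.exhaust prod.exhaust empty_iff list.set(1))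
      then have "oexp_omega g' \<le> r" "\<forall>q\<in>set ys. fst q \<le> g'"
        using cnf_head_bounds(3)[of g' k' ys'] ys by (auto simp: cnf_valid_Cons less_imp_le)
      then show ?thesis using \<open>r < oexp_omega g\<close> that by (metis oexp_omega_less_iff order.strict_trans1)
    qed
    then have "cnf_valid ((g, k) # ys)" using ys k(1) by (simp add: cnf_valid_Cons)
    moreover have "cnf_eval ((g, k) # ys) = a" using r ys by (simp add: cnf_eval_Cons)
    ultimately show ?thesis by blast
  qed
qed

lemma cnf_valid_cnf [simp]: "cnf_valid (cnf (a::'o))"
  and cnf_eval_cnf [simp]: "cnf_eval (cnf (a::'o)) = a"
proof -
  have "cnf_valid (cnf a) \<and> cnf_eval (cnf a) = a"
    unfolding cnf_def by (rule theI') (use cnf_exists cnf_unique in blast)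
  then show "cnf_valid (cnf a)" "cnf_eval (cnf a) = a" by auto
qed

lemma cnf_cnf_eval: "cnf_valid xs \<Longrightarrow> cnf (cnf_eval xs :: 'o) = xs"
  using cnf_unique cnf_valid_cnf cnf_eval_cnf by metis

lemma cnf_ne_Nil: "(a::'o) \<noteq> ozero \<Longrightarrow> cnf a \<noteq> []"
  by (metis cnf_eval_cnf cnf_eval_Nil)

lemma ell_bounds:
  assumes "(a::'o) \<noteq> ozero"
  shows "oexp_omega (ell a) \<le> a" "a < oexp_omega (osucc (ell a))"
proof -
  obtain g k ys where c: "cnf a = (g, k) # ys"
    using cnf_ne_Nil[OF assms] by (metis list.exhaust prod.exhaust)
  then show "oexp_omega (ell a) \<le> a" "a < oexp_omega (osucc (ell a))"
    using assms cnf_head_bounds(3,4)[of g k ys] cnf_valid_cnf[of a] cnf_eval_cnf[of a]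
    by (simp_all add: ell_def)
qed

lemma ell_mono: assumes "(x::'o) \<le> y" shows "ell x \<le> ell y"
proof (cases "x = ozero")
  case True then show ?thesis by (simp add: ell_def)
next
  case False
  then have "y \<noteq> ozero" using assms by auto
  show ?thesis
  proof (rule ccontr)
    assume "\<not> ell x \<le> ell y"
    then have "oexp_omega (osucc (ell y)) \<le> x"
      using ell_bounds(1)[OF False] by (metis oexp_omega_le_iff osucc_le_iff not_le order.trans)
    then show False using ell_bounds(2)[OF \<open>y \<noteq> ozero\<close>] assms by (metis leD order.strict_trans2)
  qed
qed

end

section \<open>The associated sequences\<close>

definition oexp_omega_fund :: "('o::wellorder \<Rightarrow> nat \<Rightarrow> 'o) \<Rightarrow> 'o \<Rightarrow> nat \<Rightarrow> 'o" where
  "oexp_omega_fund zeta g n =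
     (if is_succ g then oterm (opred g) n else oexp_omega (zeta g n))"

lemma hat_eq_oadd_fund:
  assumes "cnf b = pre @ [(g, k)]"
  shows "hat zeta b n = oadd (cnf_eval (pre @ [(g, k - 1)])) (oexp_omega_fund zeta g n)"
  using assms by (simp add: hat_def Let_def oexp_omega_fund_def)

context countable_ordinals
begin

lemma cnf_snoc_decomp:
  assumes "(b::'o) \<noteq> ozero"
  obtains pre g k where "cnf b = pre @ [(g, k)]"
    "b = oadd (cnf_eval (pre @ [(g, k - 1)])) (oexp_omega g)"
proof -
  obtain pre g k where c: "cnf b = pre @ [(g, k)]"
    using cnf_ne_Nil[OF assms] by (metis rev_exhaust prod.exhaust)
  have "1 \<le> k" using cnf_valid_cnf[of b] by (simp add: c cnf_valid_def)
  then obtain j where j: "k = Suc j" by (cases k) auto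
  have "b = cnf_eval (pre @ [(g, k)])" using cnf_eval_cnf[of b] by (simp add: c)
  also have "\<dots> = oadd (cnf_eval (pre @ [(g, k - 1)])) (oexp_omega g)"
    by (simp add: cnf_eval_snoc j oterm_Suc oadd_assoc)
  finally show ?thesis using that c by blast
qed

lemma zeta_less: "is_limit l \<Longrightarrow> zeta l n < (l::'o)"
proof -
  assume l: "is_limit l"
  then have sm: "strict_mono (zeta l)" and sup: "osup (range (zeta l)) = l"
    using fundamental_seq by auto
  have "zeta l n < zeta l (Suc n)" using sm by (simp add: strict_mono_def)
  also have "zeta l (Suc n) \<le> osup (range (zeta l))" by (rule osup_upper) auto
  finally show ?thesis using sup by simp
qed

lemma hat_less:
  assumes l: "is_limit (l::'o)"
  shows "hat zeta l n < l"
proof -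
  have "l \<noteq> ozero" using l by auto
  then obtain pre g k where c: "cnf l = pre @ [(g, k)]"
    and l_eq: "l = oadd (cnf_eval (pre @ [(g, k - 1)])) (oexp_omega g)"
    by (rule cnf_snoc_decomp)
  have "oexp_omega_fund zeta g n < oexp_omega g"
  proof (cases g rule: ord_cases)
    case zero
    then show ?thesis using l l_eq by (simp add: oone_def)
  next
    case (succ p) then show ?thesis by (simp add: oexp_omega_fund_def oterm_less_oexp_omega_osucc)
  next
    case limit then show ?thesis by (simp add: oexp_omega_fund_def limit_not_succ zeta_less)
  qed
  then show ?thesis using hat_eq_oadd_fund[OF c] l_eq by (metis oadd_less_iff)
qed

lemma cnf_oadd_oterm_prepend:
  assumes "cnf_valid xs" "\<forall>p\<in>set xs. fst p < \<eta>" "1 \<le> m"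
  shows "cnf (oadd (oterm \<eta> m) (cnf_eval xs)) = (\<eta>, m) # (xs::('o \<times> nat) list)"
  using assms cnf_cnf_eval[of "(\<eta>, m) # xs"] by (simp add: cnf_valid_Cons cnf_eval_Cons)

lemma cnf_oadd_oterm_merge:
  assumes "cnf_valid ((\<eta>, k) # xs)" "1 \<le> m"
  shows "cnf (oadd (oterm \<eta> m) (cnf_eval ((\<eta>, k) # xs))) = (\<eta>, m + k) # (xs::('o \<times> nat) list)"
  using assms cnf_cnf_eval[of "(\<eta>, m + k) # xs"]
  by (simp add: cnf_valid_Cons cnf_eval_Cons omul_onat_add oadd_assoc)

lemma cnf_oadd_oterm_snoc:
  assumes c: "cnf (a::'o) = pre @ [(g, k)]" and "ell a \<le> \<eta>" "1 \<le> m"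
  obtains pre' k' where "cnf (oadd (oterm \<eta> m) a) = pre' @ [(g, k')]"
    "cnf_eval (pre' @ [(g, k' - 1)]) = oadd (oterm \<eta> m) (cnf_eval (pre @ [(g, k - 1)]))"
proof -
  obtain g1 k1 ys where xs: "pre @ [(g, k)] = (g1, k1) # ys"
    by (metis append_is_Nil_conv neq_Nil_conv prod.exhaust)
  have a: "a = cnf_eval ((g1, k1) # ys)" and va: "cnf_valid ((g1, k1) # ys)"
    using cnf_eval_cnf[of a] cnf_valid_cnf[of a] c xs by simp_all
  have "a \<noteq> ozero" using c cnf_cnf_eval[of "[]"] by auto
  then have "g1 \<le> \<eta>" using assms(2) c xs by (simp add: ell_def)
  then consider "g1 < \<eta>" | "g1 = \<eta>" "pre = []" | pre0 where "g1 = \<eta>" "pre = (\<eta>, k1) # pre0"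
    using xs by (cases pre) (auto simp: le_less)
  then show ?thesis
  proof cases
    case 1
    then have "\<forall>p\<in>set ((g1, k1) # ys). fst p < \<eta>"
      using va by (auto simp: cnf_valid_Cons intro: order.strict_trans)
    then have "cnf (oadd (oterm \<eta> m) a) = ((\<eta>, m) # pre) @ [(g, k)]"
      using cnf_oadd_oterm_prepend[OF va _ assms(3)] by (simp add: a xs)
    then show ?thesis using that by (simp add: cnf_eval_Cons oadd_assoc)
  next
    case 2
    then have g: "g = \<eta>" "k1 = k" "ys = []" using xs by auto
    then have "cnf (oadd (oterm \<eta> m) a) = [] @ [(g, m + k)]"
      using 2 cnf_oadd_oterm_merge[of \<eta> k1 ys m] va assms(3) by (simp add: a)
    moreover have "oterm \<eta> (m + k - 1) = oadd (oterm \<eta> m) (oterm \<eta> (k - 1))"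
      using va g omul_onat_add[of _ m "k - 1"] by (simp add: cnf_valid_Cons)
    ultimately show ?thesis using that 2 g by (simp add: cnf_eval_Cons)
  next
    case 3
    then have "cnf (oadd (oterm \<eta> m) a) = ((\<eta>, m + k1) # pre0) @ [(g, k)]"
      using xs va assms(3) cnf_oadd_oterm_merge[of \<eta> k1 ys m] by (auto simp: a)
    then show ?thesis using that 3 by (simp add: cnf_eval_Cons omul_onat_add oadd_assoc)
  qed
qed

lemma hat_oadd_oterm:
  assumes "is_limit (a::'o)" "ell a \<le> \<eta>" "1 \<le> m"
  shows "hat zeta (oadd (oterm \<eta> m) a) n = oadd (oterm \<eta> m) (hat zeta a n)"
proof -
  have "a \<noteq> ozero" using assms(1) by auto
  then obtain pre g k where c: "cnf a = pre @ [(g, k)]" by (rule cnf_snoc_decomp)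
  obtain pre' k' where c': "cnf (oadd (oterm \<eta> m) a) = pre' @ [(g, k')]"
    and eval: "cnf_eval (pre' @ [(g, k' - 1)]) = oadd (oterm \<eta> m) (cnf_eval (pre @ [(g, k - 1)]))"
    using cnf_oadd_oterm_snoc[OF c assms(2,3)] .
  show ?thesis unfolding hat_eq_oadd_fund[OF c] hat_eq_oadd_fund[OF c'] eval by (rule oadd_assoc)
qed

end

section \<open>Composition of families\<close>

definition separated :: "nat set set \<Rightarrow> bool" where
  "separated FF \<longleftrightarrow> finite FF \<and> (\<forall>F\<in>FF. F \<noteq> {} \<and> finite F)
     \<and> (\<forall>E\<in>FF. \<forall>F\<in>FF. E \<noteq> F \<longrightarrow> (\<forall>x\<in>E. \<forall>y\<in>F. x < y) \<or> (\<forall>x\<in>F. \<forall>y\<in>E. x < y))"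

lemma separatedD:
  assumes "separated FF" "F \<in> FF"
  shows "F \<noteq> {}" "finite F" "Min F \<in> F"
  using assms by (auto simp: separated_def)

lemma separated_Min_less:
  assumes "separated FF" "E \<in> FF" "F \<in> FF" "Min E < Min F"
  shows "\<forall>x\<in>E. \<forall>y\<in>F. x < y"
proof -
  have "E \<noteq> F" using assms(4) by auto
  moreover have "\<not> (\<forall>x\<in>F. \<forall>y\<in>E. x < y)"
  proof
    assume "\<forall>x\<in>F. \<forall>y\<in>E. x < y"
    then have "Min F < Min E" using separatedD(3)[OF assms(1)] assms(2,3) by blast
    then show False using assms(4) by simp
  qed
  ultimately show ?thesis using assms(1-3) unfolding separated_def by blast
qed

lemma separated_Min_inject:
  assumes "separated FF" "E \<in> FF" "F \<in> FF" "Min E = Min F"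
  shows "E = F"
proof (rule ccontr)
  assume "E \<noteq> F"
  then have "(\<forall>x\<in>E. \<forall>y\<in>F. x < y) \<or> (\<forall>x\<in>F. \<forall>y\<in>E. x < y)"
    using assms(1-3) unfolding separated_def by blast
  moreover have "Min E \<in> E" "Min F \<in> F" using separatedD(3)[OF assms(1)] assms(2,3) by blast+
  ultimately have "Min E < Min F \<or> Min F < Min E" by blast
  then show False using assms(4) by simp
qed

lemma Min_Union_separated:
  assumes "separated FF" "FF \<noteq> {}"
  shows "Min (\<Union>FF) = Min (Min ` FF)"
proof (rule antisym)
  have fin: "finite FF" "\<And>F. F \<in> FF \<Longrightarrow> finite F" using assms(1) by (auto simp: separated_def)
  then have fin_Union: "finite (\<Union>FF)" by (rule finite_Union)
  have "Min (Min ` FF) \<in> Min ` FF" using fin assms(2) by (intro Min_in) auto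
  then obtain F0 where F0: "F0 \<in> FF" "Min (Min ` FF) = Min F0" by auto
  then have "Min F0 \<in> \<Union>FF" using separatedD(3)[OF assms(1)] by blast
  then show "Min (\<Union>FF) \<le> Min (Min ` FF)" using F0(2) fin_Union by simp
  have "\<Union>FF \<noteq> {}" using assms(2) separatedD(1)[OF assms(1)] by blast
  then have "Min (\<Union>FF) \<in> \<Union>FF" using fin_Union by (rule Min_in[rotated])
  then obtain F where F: "F \<in> FF" "Min (\<Union>FF) \<in> F" by blast
  then have "Min (Min ` FF) \<le> Min F" using fin by simp
  also have "Min F \<le> Min (\<Union>FF)" using F fin by simp
  finally show "Min (Min ` FF) \<le> Min (\<Union>FF)" .
qed

lemma separated_subset:
  assumes "separated FF" "GG \<subseteq> FF"
  shows "separated GG"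
proof -
  have "finite GG" using assms finite_subset by (auto simp: separated_def)
  then show ?thesis using assms unfolding separated_def by blast
qed

lemma separated_image:
  assumes "separated GG" "\<And>X. X \<in> GG \<Longrightarrow> h X \<noteq> {} \<and> finite (h X)"
    "\<And>X Y. X \<in> GG \<Longrightarrow> Y \<in> GG \<Longrightarrow> \<forall>x\<in>X. \<forall>y\<in>Y. x < y \<Longrightarrow> \<forall>x\<in>h X. \<forall>y\<in>h Y. x < y"
  shows "separated (h ` GG)"
  unfolding separated_def
proof (intro conjI ballI impI)
  show "finite (h ` GG)" using assms(1) by (simp add: separated_def)
next
  fix Z assume "Z \<in> h ` GG"
  then show "Z \<noteq> {}" "finite Z" using assms(2) by auto
next
  fix Z W assume "Z \<in> h ` GG" "W \<in> h ` GG" "Z \<noteq> W"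
  then obtain X Y where XY: "X \<in> GG" "Y \<in> GG" "Z = h X" "W = h Y" "X \<noteq> Y" by blast
  then have "(\<forall>x\<in>X. \<forall>y\<in>Y. x < y) \<or> (\<forall>x\<in>Y. \<forall>y\<in>X. x < y)"
    using assms(1) unfolding separated_def by blast
  then show "(\<forall>x\<in>Z. \<forall>y\<in>W. x < y) \<or> (\<forall>x\<in>W. \<forall>y\<in>Z. x < y)"
    using assms(3) XY by blast
qed

lemma separated_UN:
  assumes "separated GG" "\<And>X. X \<in> GG \<Longrightarrow> separated (f X) \<and> \<Union>(f X) \<subseteq> X"
  shows "separated (\<Union>X\<in>GG. f X)"
  unfolding separated_def
proof (intro conjI ballI impI)
  show "finite (\<Union>X\<in>GG. f X)" using assms by (auto simp: separated_def)
next
  fix F assume "F \<in> (\<Union>X\<in>GG. f X)"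
  then obtain X where "X \<in> GG" "F \<in> f X" by blast
  then show "F \<noteq> {}" "finite F" using assms(2) separatedD by blast+
next
  fix E F assume "E \<in> (\<Union>X\<in>GG. f X)" "F \<in> (\<Union>X\<in>GG. f X)" "E \<noteq> F"
  then obtain X Y where XY: "X \<in> GG" "E \<in> f X" "Y \<in> GG" "F \<in> f Y" by blast
  show "(\<forall>x\<in>E. \<forall>y\<in>F. x < y) \<or> (\<forall>x\<in>F. \<forall>y\<in>E. x < y)"
  proof (cases "X = Y")
    case True
    then show ?thesis using assms(2)[OF XY(1)] XY \<open>E \<noteq> F\<close> unfolding separated_def by blast
  next
    case False
    then have "(\<forall>x\<in>X. \<forall>y\<in>Y. x < y) \<or> (\<forall>x\<in>Y. \<forall>y\<in>X. x < y)"
      using assms(1) XY unfolding separated_def by blast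
    moreover have "E \<subseteq> X" "F \<subseteq> Y" using assms(2) XY by blast+
    ultimately show ?thesis by blast
  qed
qed

lemma fset_less_iff:
  "finite E \<Longrightarrow> finite F \<Longrightarrow> E \<noteq> {} \<Longrightarrow> F \<noteq> {} \<Longrightarrow> fset_less E F \<longleftrightarrow> (\<forall>x\<in>E. \<forall>y\<in>F. x < y)"
  by (simp add: fset_less_def Max_less_iff Min_gr_iff) blast

lemma sorted_wrt_total_on_set:
  "sorted_wrt P xs \<Longrightarrow> x \<in> set xs \<Longrightarrow> y \<in> set xs \<Longrightarrow> x \<noteq> y \<Longrightarrow> P x y \<or> P y x"
  by (induction xs) auto

lemma fam_comp_eq_separated:
  "fam_comp M N = {\<Union>FF | FF. separated FF \<and> FF \<subseteq> N \<and> Min ` FF \<in> M}"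
proof (intro set_eqI iffI)
  fix G assume "G \<in> fam_comp M N"
  then obtain Fs where G: "G = \<Union>(set Fs)" and Fs: "\<forall>F\<in>set Fs. F \<in> N \<and> F \<noteq> {} \<and> finite F"
    "sorted_wrt fset_less Fs" "set (map Min Fs) \<in> M" unfolding fam_comp_def by auto
  have "separated (set Fs)"
    unfolding separated_def using Fs(1) sorted_wrt_total_on_set[OF Fs(2)] fset_less_iff by auto
  then show "G \<in> {\<Union>FF | FF. separated FF \<and> FF \<subseteq> N \<and> Min ` FF \<in> M}" using G Fs by auto
next
  fix G assume "G \<in> {\<Union>FF | FF. separated FF \<and> FF \<subseteq> N \<and> Min ` FF \<in> M}"
  then obtain FF where G: "G = \<Union>FF" and FF: "separated FF" "FF \<subseteq> N" "Min ` FF \<in> M" by blast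
  define block where "block n = (THE F. F \<in> FF \<and> Min F = n)" for n
  have block: "block (Min F) = F" if "F \<in> FF" for F
    unfolding block_def by (rule the_equality) (use separated_Min_inject[OF FF(1)] that in auto)
  have fin: "finite (Min ` FF)" using FF(1) by (simp add: separated_def)
  define Fs where "Fs = map block (sorted_list_of_set (Min ` FF))"
  have set_Fs: "set Fs = FF" unfolding Fs_def using fin block by (auto simp: image_def)
  have "map Min Fs = sorted_list_of_set (Min ` FF)"
    unfolding Fs_def map_map by (rule map_idI) (use fin block in auto)
  then have "set (map Min Fs) \<in> M" using fin FF(3) by simp
  moreover have "sorted_wrt fset_less Fs"
    unfolding Fs_def sorted_wrt_map
  proof (rule sorted_wrt_mono_rel[OF _ strict_sorted_list_of_set])
    fix m n assume "m \<in> set (sorted_list_of_set (Min ` FF))" "n \<in> set (sorted_list_of_set (Min ` FF))" "m < n"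
    then obtain E F where EF: "E \<in> FF" "F \<in> FF" "m = Min E" "n = Min F" using fin by auto
    then show "fset_less (block m) (block n)"
      using separated_Min_less[OF FF(1) EF(1,2)] separatedD[OF FF(1)] fset_less_iff \<open>m < n\<close>
      by (simp add: block)
  qed
  moreover have "\<forall>F\<in>set Fs. F \<in> N \<and> F \<noteq> {} \<and> finite F"
    using set_Fs FF(2) separatedD[OF FF(1)] by auto
  ultimately show "G \<in> fam_comp M N"
    unfolding fam_comp_def G set_Fs[symmetric] by blast
qed

lemma fam_compI: "separated FF \<Longrightarrow> FF \<subseteq> N \<Longrightarrow> Min ` FF \<in> M \<Longrightarrow> \<Union>FF \<in> fam_comp M N"
  unfolding fam_comp_eq_separated by blast

lemma fam_compE:
  assumes "G \<in> fam_comp M N"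
  obtains FF where "G = \<Union>FF" "separated FF" "FF \<subseteq> N" "Min ` FF \<in> M"
  using assms unfolding fam_comp_eq_separated by blast

lemma separated_Union:
  assumes "separated FF"
  shows "finite (\<Union>FF)" "\<Union>FF = {} \<longleftrightarrow> FF = {}"
  using assms by (auto simp: separated_def)

lemma separated_regroup:
  assumes "separated FF" "separated EE" "\<And>E. E \<in> EE \<Longrightarrow> {F \<in> FF. Min F \<in> E} \<noteq> {}"
  shows "separated ((\<lambda>E. \<Union>{F \<in> FF. Min F \<in> E}) ` EE)"
proof (rule separated_image[OF assms(2)])
  fix E assume "E \<in> EE"
  moreover have "separated {F \<in> FF. Min F \<in> E}" by (rule separated_subset[OF assms(1)]) auto
  ultimately show "\<Union>{F \<in> FF. Min F \<in> E} \<noteq> {} \<and> finite (\<Union>{F \<in> FF. Min F \<in> E})"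
    using separated_Union assms(3) by blast
next
  fix E E' :: "nat set" assume E: "\<forall>x\<in>E. \<forall>y\<in>E'. x < y"
  show "\<forall>x\<in>\<Union>{F \<in> FF. Min F \<in> E}. \<forall>y\<in>\<Union>{F \<in> FF. Min F \<in> E'}. x < y"
  proof (intro ballI)
    fix x y assume "x \<in> \<Union>{F \<in> FF. Min F \<in> E}" "y \<in> \<Union>{F \<in> FF. Min F \<in> E'}"
    then obtain F F' where F: "F \<in> FF" "Min F \<in> E" "x \<in> F" and F': "F' \<in> FF" "Min F' \<in> E'" "y \<in> F'"
      by blast
    then have "Min F < Min F'" using E by blast
    then show "x < y" using separated_Min_less[OF assms(1) F(1) F'(1)] F(3) F'(3) by blast
  qed
qed

text \<open>Regroup the blocks of \<open>FF\<close> according to the blocks \<open>E\<close> of their minima.\<close>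
lemma fam_comp_assoc_subset: "fam_comp (fam_comp L M) N \<subseteq> fam_comp L (fam_comp M N)"
proof
  fix G assume "G \<in> fam_comp (fam_comp L M) N"
  then obtain FF where G: "G = \<Union>FF" and FF: "separated FF" "FF \<subseteq> N" "Min ` FF \<in> fam_comp L M"
    by (rule fam_compE)
  from FF(3) obtain EE where EE: "Min ` FF = \<Union>EE" "separated EE" "EE \<subseteq> M" "Min ` EE \<in> L"
    by (rule fam_compE)
  define block where "block E = {F \<in> FF. Min F \<in> E}" for E
  have Min_block: "Min ` block E = E" if "E \<in> EE" for E
  proof
    show "Min ` block E \<subseteq> E" unfolding block_def by auto
    have "E \<subseteq> Min ` FF" using that EE(1) by (metis Union_upper)
    then show "E \<subseteq> Min ` block E" unfolding block_def by (auto simp: image_iff)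
  qed
  have block_sep: "separated (block E)" for E
    by (rule separated_subset[OF FF(1)]) (auto simp: block_def)
  have block_ne: "block E \<noteq> {}" if "E \<in> EE" for E
    using Min_block[OF that] separatedD(1)[OF EE(2) that] by auto
  define GG where "GG = (\<lambda>E. \<Union>(block E)) ` EE"
  have "separated GG" unfolding GG_def block_def
    by (rule separated_regroup[OF FF(1) EE(2)]) (use block_ne in \<open>simp add: block_def\<close>)
  moreover have "GG \<subseteq> fam_comp M N"
  proof
    fix X assume "X \<in> GG"
    then obtain E where "E \<in> EE" "X = \<Union>(block E)" unfolding GG_def by blast
    moreover have "block E \<subseteq> N" using FF(2) unfolding block_def by blast
    ultimately show "X \<in> fam_comp M N" using fam_compI[OF block_sep] Min_block EE(3) by auto
  qed
  moreover have "Min ` GG = Min ` EE"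
    unfolding GG_def image_image using Min_Union_separated[OF block_sep block_ne] Min_block
    by (intro image_cong) simp_all
  moreover have "\<Union>GG = G"
  proof
    show "\<Union>GG \<subseteq> G" unfolding GG_def block_def G by blast
    show "G \<subseteq> \<Union>GG"
    proof
      fix x assume "x \<in> G"
      then obtain F where F: "F \<in> FF" "x \<in> F" using G by blast
      then have "Min F \<in> \<Union>EE" using EE(1) by (metis imageI)
      then obtain E where "E \<in> EE" "Min F \<in> E" by blast
      then show "x \<in> \<Union>GG" unfolding GG_def block_def using F by blast
    qed
  qed
  ultimately show "G \<in> fam_comp L (fam_comp M N)" using fam_compI[of GG] EE(4) by metis
qed

text \<open>Flatten: the blocks of all the inner decompositions together decompose \<open>G\<close>.\<close>
lemma fam_comp_assoc_supset: "fam_comp L (fam_comp M N) \<subseteq> fam_comp (fam_comp L M) N"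
proof
  fix G assume "G \<in> fam_comp L (fam_comp M N)"
  then obtain GG where G: "G = \<Union>GG" and GG: "separated GG" "GG \<subseteq> fam_comp M N" "Min ` GG \<in> L"
    by (rule fam_compE)
  have "\<exists>FF. \<Union>FF = X \<and> separated FF \<and> FF \<subseteq> N \<and> Min ` FF \<in> M" if "X \<in> GG" for X
  proof -
    from that GG(2) have "X \<in> fam_comp M N" by blast
    then obtain FF where "X = \<Union>FF" "separated FF" "FF \<subseteq> N" "Min ` FF \<in> M" by (rule fam_compE)
    then show ?thesis by blast
  qed
  then obtain f
    where f: "\<And>X. X \<in> GG \<Longrightarrow> \<Union>(f X) = X \<and> separated (f X) \<and> f X \<subseteq> N \<and> Min ` f X \<in> M"
    by metis
  have f_ne: "f X \<noteq> {}" if "X \<in> GG" for X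
    using f[OF that] separatedD(1)[OF GG(1) that] by auto
  have Min_f: "Min ` f X \<subseteq> X" if "X \<in> GG" for X
    using f[OF that] separatedD(3) by blast
  define FF where "FF = (\<Union>X\<in>GG. f X)"
  define EE where "EE = (\<lambda>X. Min ` f X) ` GG"
  have EE_sep: "separated EE" unfolding EE_def
  proof (rule separated_image[OF GG(1)])
    fix X assume "X \<in> GG"
    then show "Min ` f X \<noteq> {} \<and> finite (Min ` f X)"
      using f f_ne by (simp add: separated_def)
  next
    fix X Y assume "X \<in> GG" "Y \<in> GG" "\<forall>x\<in>X. \<forall>y\<in>Y. x < y"
    then show "\<forall>x\<in>Min ` f X. \<forall>y\<in>Min ` f Y. x < y" using Min_f by blast
  qed
  have EE_sub: "EE \<subseteq> M" using f unfolding EE_def by blast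
  have "Min (Min ` f X) = Min X" if "X \<in> GG" for X
    using Min_Union_separated[of "f X"] f[OF that] f_ne[OF that] by simp
  then have "Min ` EE = Min ` GG" unfolding EE_def image_image by simp
  then have FF_Min: "Min ` FF \<in> fam_comp L M"
    using fam_compI[OF EE_sep EE_sub] GG(3) unfolding FF_def EE_def image_UN by simp
  have FF_sep: "separated FF" unfolding FF_def
    by (rule separated_UN[OF GG(1)]) (use f in blast)
  have FF_sub: "FF \<subseteq> N" using f unfolding FF_def by blast
  have "\<Union>FF = (\<Union>X\<in>GG. \<Union>(f X))" unfolding FF_def by blast
  also have "\<dots> = G" using f unfolding G by simp
  finally show "G \<in> fam_comp (fam_comp L M) N" using fam_compI[OF FF_sep FF_sub FF_Min] by simp
qed

lemma fam_comp_assoc: "fam_comp (fam_comp L M) N = fam_comp L (fam_comp M N)"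
  using fam_comp_assoc_subset fam_comp_assoc_supset by blast

section \<open>Schreier families\<close>

definition diag_family :: "(nat \<Rightarrow> nat set set) \<Rightarrow> nat set set" where
  "diag_family T = {{}} \<union> {F. F \<noteq> {} \<and> (\<exists>n. 1 \<le> n \<and> n \<le> Min F \<and> F \<in> T n)}"

lemma fam_comp_empty: "{} \<in> M \<Longrightarrow> {} \<in> fam_comp M N"
  using fam_compI[of "{}" N M] by (simp add: separated_def)

lemma fam_comp_finite_pos:
  "G \<in> fam_comp M N \<Longrightarrow> \<forall>F\<in>N. finite F \<and> 0 \<notin> F \<Longrightarrow> finite G \<and> 0 \<notin> G"
  by (elim fam_compE) (use separated_Union in blast)

lemma fam_comp_schreier0:
  assumes N: "\<forall>F\<in>N. finite F \<and> 0 \<notin> F" "{} \<in> N"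
  shows "fam_comp schreier0 N = N"
proof (intro set_eqI iffI)
  fix G assume "G \<in> fam_comp schreier0 N"
  then obtain FF where G: "G = \<Union>FF" and FF: "separated FF" "FF \<subseteq> N" "Min ` FF \<in> schreier0"
    by (rule fam_compE)
  show "G \<in> N"
  proof (cases "FF = {}")
    case True then show ?thesis using G N by simp
  next
    case False
    then obtain F0 where F0: "F0 \<in> FF" by blast
    obtain n where "Min ` FF = {n}" using FF(3) False unfolding schreier0_def by blast
    then have "FF = {F0}" using F0 separated_Min_inject[OF FF(1)] by blast
    then show ?thesis using G FF(2) by simp
  qed
next
  fix G assume G: "G \<in> N"
  show "G \<in> fam_comp schreier0 N"
  proof (cases "G = {}")
    case True then show ?thesis using fam_comp_empty[of schreier0] by (simp add: schreier0_def)
  next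
    case False
    have "finite G" "0 \<notin> G" using G N by auto
    then have "Min G \<noteq> 0" using False Min_in by metis
    then have "Min ` {G} \<in> schreier0" unfolding schreier0_def by auto
    moreover have "separated {G}" using False \<open>finite G\<close> by (simp add: separated_def)
    ultimately show ?thesis using fam_compI[of "{G}" N schreier0] G by simp
  qed
qed

lemma fam_comp_diag_family: "fam_comp (diag_family T) N = diag_family (\<lambda>n. fam_comp (T n) N)"
proof (intro set_eqI iffI)
  fix G assume "G \<in> fam_comp (diag_family T) N"
  then obtain FF where G: "G = \<Union>FF" and FF: "separated FF" "FF \<subseteq> N" "Min ` FF \<in> diag_family T"
    by (rule fam_compE)
  show "G \<in> diag_family (\<lambda>n. fam_comp (T n) N)"
  proof (cases "FF = {}")
    case True then show ?thesis using G by (simp add: diag_family_def)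
  next
    case False
    then obtain n where n: "1 \<le> n" "n \<le> Min (Min ` FF)" "Min ` FF \<in> T n"
      using FF(3) unfolding diag_family_def by auto
    moreover have "Min G = Min (Min ` FF)" using G Min_Union_separated[OF FF(1) False] by simp
    moreover have "G \<noteq> {}" using G separated_Union(2)[OF FF(1)] False by simp
    ultimately show ?thesis using fam_compI[OF FF(1,2) n(3)] G unfolding diag_family_def by auto
  qed
next
  fix G assume G: "G \<in> diag_family (\<lambda>n. fam_comp (T n) N)"
  show "G \<in> fam_comp (diag_family T) N"
  proof (cases "G = {}")
    case True then show ?thesis using fam_comp_empty by (simp add: diag_family_def)
  next
    case False
    then obtain n where n: "1 \<le> n" "n \<le> Min G" "G \<in> fam_comp (T n) N"
      using G unfolding diag_family_def by auto
    then obtain FF where FF: "G = \<Union>FF" "separated FF" "FF \<subseteq> N" "Min ` FF \<in> T n"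
      by (elim fam_compE)
    then have "FF \<noteq> {}" using False by auto
    then have "Min ` FF \<in> diag_family T"
      using FF n Min_Union_separated[OF FF(2)] unfolding diag_family_def by auto
    then show ?thesis using fam_compI[OF FF(2,3)] FF(1) by simp
  qed
qed

context countable_ordinals
begin

lemma schreier_eq_ord_rec:
  "schreier zeta = ord_rec schreier0 (fam_comp schreier1) (\<lambda>S l. diag_family (\<lambda>n. S (hat zeta l n)))"
  (is "_ = ord_rec _ _ ?L")
proof -
  have L: "limit_local ?L"
    unfolding limit_local_def by (simp add: hat_less)
  show ?thesis
    unfolding schreier_def
  proof (rule the_equality)
    show "schreier_rec zeta (ord_rec schreier0 (fam_comp schreier1) ?L)"
      unfolding schreier_rec_def using L by (simp add: ord_rec_limit diag_family_def)
  next
    fix S assume S: "schreier_rec zeta S"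
    show "S = ord_rec schreier0 (fam_comp schreier1) ?L"
    proof (rule ord_rec_unique[OF L])
      show "S ozero = schreier0" "S (osucc b) = fam_comp schreier1 (S b)" for b
        using S by (simp_all add: schreier_rec_def)
      show "S l = ?L S l" if "is_limit l" for l
        using S that by (simp add: schreier_rec_def diag_family_def)
    qed
  qed
qed

lemma schreier_ozero: "schreier zeta ozero = schreier0"
  and schreier_osucc: "schreier zeta (osucc b) = fam_comp schreier1 (schreier zeta b)"
  and schreier_limit: "is_limit l \<Longrightarrow> schreier zeta l = diag_family (\<lambda>n. schreier zeta (hat zeta l n))"
  unfolding schreier_eq_ord_rec by (simp_all add: ord_rec_limit limit_local_def hat_less)

lemma schreier_finite_pos: "\<forall>F\<in>schreier zeta x. finite F \<and> 0 \<notin> F"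
  and empty_in_schreier: "{} \<in> schreier zeta x"
proof -
  have "(\<forall>F\<in>schreier zeta x. finite F \<and> 0 \<notin> F) \<and> {} \<in> schreier zeta x"
  proof (induction x rule: ord_induct)
    case zero then show ?case by (auto simp: schreier_ozero schreier0_def)
  next
    case (succ y)
    have "{} \<in> schreier1" by (simp add: schreier1_def)
    then show ?case using succ fam_comp_finite_pos fam_comp_empty by (simp add: schreier_osucc)
  next
    case (limit x)
    then have "\<forall>F\<in>schreier zeta (hat zeta x n). finite F \<and> 0 \<notin> F" for n using hat_less by blast
    then show ?case using limit(1) by (auto simp: schreier_limit diag_family_def)
  qed
  then show "\<forall>F\<in>schreier zeta x. finite F \<and> 0 \<notin> F" "{} \<in> schreier zeta x" by auto
qed

lemma fam_comp_schreier_oterm: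
  assumes "ell a \<le> \<eta>" "1 \<le> m"
  shows "fam_comp (schreier zeta a) (schreier zeta (oterm \<eta> m)) = schreier zeta (oadd (oterm \<eta> m) a)"
  using assms(1)
proof (induction a rule: less_induct)
  case (less a)
  let ?N = "schreier zeta (oterm \<eta> m)"
  show ?case
  proof (cases a rule: ord_cases)
    case zero
    then show ?thesis
      using schreier_finite_pos empty_in_schreier by (simp add: schreier_ozero fam_comp_schreier0)
  next
    case (succ y)
    then have "ell y \<le> \<eta>" using less.prems ell_mono less_osucc by (metis less_imp_le order.trans)
    then have "fam_comp (schreier zeta y) ?N = schreier zeta (oadd (oterm \<eta> m) y)"
      using less.IH succ less_osucc by blast
    then show ?thesis using succ by (simp add: schreier_osucc fam_comp_assoc)
  next
    case limit
    have "fam_comp (schreier zeta (hat zeta a n)) ?N = schreier zeta (hat zeta (oadd (oterm \<eta> m) a) n)" for n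
    proof -
      have "ell (hat zeta a n) \<le> \<eta>"
        using less.prems ell_mono hat_less[OF limit] by (metis less_imp_le order.trans)
      then show ?thesis
        using less.IH hat_less[OF limit] hat_oadd_oterm[OF limit less.prems assms(2)] by simp
    qed
    then show ?thesis
      using limit oadd_is_limit[OF limit] by (simp add: schreier_limit fam_comp_diag_family)
  qed
qed

end

theorem lemma25:
  fixes zeta :: "'o::wellorder \<Rightarrow> nat \<Rightarrow> 'o" and \<alpha> \<eta> :: 'o and m :: nat
  assumes "\<forall>x::'o. countable {y. y < x}"
    and "\<not> countable (UNIV :: 'o set)"
    and "\<forall>l. is_limit l \<longrightarrow> strict_mono (zeta l) \<and> osup (range (zeta l)) = l"
    and "ell \<alpha> \<le> \<eta>"
    and "1 \<le> m"
  shows "fam_comp (schreier zeta \<alpha>) (schreier zeta (omul (oexp_omega \<eta>) (onat m)))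
       = schreier zeta (oadd (omul (oexp_omega \<eta>) (onat m)) \<alpha>)"
proof -
  interpret countable_ordinals zeta using assms(1-3) by unfold_locales
  show ?thesis using fam_comp_schreier_oterm[OF assms(4,5)] .
qed

end
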